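(* Suppose $$S^{**}<\min\left\{\frac{\mu_1'-\mu_0}{\alpha_1},\ \frac{\mu_2'-\mu_0}{\alpha_2},\ \frac{\mu_3'-\mu_0}{\hat\alpha_3}\right\},$$ where $\hat\alpha_3=\alpha_3+\beta_1+\beta_2$. Then for every solution of the system below with nonnegative initial data and $S(0)>0$, $$\lim_{t\to\infty}I_1(t)=\lim_{t\to\infty}I_2(t)=\lim_{t\to\infty}I_{12}(t)=\lim_{t\to\infty}R(t)=0,\qquad \lim_{t\to\infty}S(t)=S^{**},$$ i.e. the disease-free equilibrium $G_2=(S^{**},0,0,0,0)$ is globally asymptotically stable (with respect to solutions with $S(0)>0$).
   Context: Consider, for $t\ge0$, the system $S'=\big(b(1-\tfrac{N}{K})-\alpha_1I_1-\alpha_2I_2-(\beta_1+\beta_2+\alpha_3)I_{12}-\mu_0\big)S$, $I_1'=\big(b(1-\tfrac{N}{K})+\alpha_1S-\eta_1I_{12}-\gamma_1I_2-\mu_1\big)I_1+\beta_1SI_{12}$, $I_2'=\big(b(1-\tfrac{N}{K})+\alpha_2S-\eta_2I_{12}-\gamma_2I_1-\mu_2\big)I_2+\beta_2SI_{12}$, $I_{12}'=\big(b(1-\tfrac{N}{K})+\alpha_3S+\eta_1I_1+\eta_2I_2-\mu_3\big)I_{12}+(\gamma_1+\gamma_2)I_1I_2$, $R'=\big(b(1-\tfrac{N}{K})-\mu_4'\big)R+\rho_1I_1+\rho_2I_2+\rho_3I_{12}$, where $N=S+I_1+I_2+I_{12}+R$. All parameters $b,K,\alpha_i,\beta_i,\gamma_i,\eta_i,\rho_i,\mu_0,\mu_i'$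 are positive and $\mu_i=\rho_i+\mu_i'$ for $i=1,2,3$. Standing assumptions: $b>\mu_0$, $b>\mu_i$ ($i=1,2,3$), $b>\mu_4'$, and $\mu_0<\mu_4'<\mu_j'$ for $j=1,2,3$. Set $\sigma_k=(\mu_k-\mu_0)/\alpha_k$ ($k=1,2,3$), assumed to satisfy $\sigma_1<\sigma_2<\sigma_3$, and $S^{**}=\frac{K}{b}(b-\mu_0)$. *)

theory Defs
  imports "HOL-Analysis.Analysis"
begin

end

theory Submission
  imports Defs
begin

text \<open>
  Solutions starting in the nonnegative orthant stay there, because the vector field is
  quasi-positive, and S stays positive. The total population N satisfies
  N' \<le> b (1 - N/K) N - \<mu>0 N = (b/K) (S** - N) N, so N is eventually below any X > S**.
  For V = I1 + I2 + I12 + R a direct computation gives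
  S (V/S)' = N (\<alpha>1 I1 + \<alpha>2 I2 + (\<alpha>3 + \<beta>1 + \<beta>2) I12)
    - (\<mu>1' - \<mu>0) I1 - (\<mu>2' - \<mu>0) I2 - (\<mu>3' - \<mu>0) I12 - (\<mu>4' - \<mu>0) R,
  and once N \<le> X, with X strictly between S** and the threshold, this is at most -\<delta> V for
  some \<delta> > 0. Hence V/S, and with it V, decays exponentially. Finally the per-capita growth
  rate of S equals (b/K) (S** - S) + o(1), which drives S to S**.
\<close>

lemma has_real_derivative_at_of_within_atLeast:
  assumes "(f has_real_derivative D) (at t within {a..})" "t > a"
  shows "(f has_real_derivative D) (at t)"
proof -
  have "at t within {a..} = at t" using assms(2) by (intro at_within_interior) simp
  with assms(1) show ?thesis by (simp only:)
qed

lemma continuous_on_of_has_real_derivative_within_atLeast: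
  assumes "A \<subseteq> {a..}" "\<And>t. t \<in> A \<Longrightarrow> (f has_real_derivative f' t) (at t within {a..})"
  shows "continuous_on A f"
  using assms by (intro DERIV_continuous_on) (auto intro: DERIV_subset)

lemma continuous_on_Icc_bounded_above:
  fixes f :: "real \<Rightarrow> real"
  assumes "continuous_on {a..b} f"
  shows "\<exists>M. \<forall>s\<in>{a..b}. f s \<le> M"
  using compact_imp_bounded[OF compact_continuous_image[OF assms compact_Icc]]
  by (force simp: bounded_real abs_le_iff)

lemma nonneg_if_isCont_pos_on_left:
  fixes f :: "real \<Rightarrow> real"
  assumes "isCont f s" "a < s" "\<And>r. a < r \<Longrightarrow> r < s \<Longrightarrow> f r > 0"
  shows "f s \<ge> 0"
proof (rule tendsto_lowerbound)
  show "(f \<longlongrightarrow> f s) (at_left s)"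
    using assms(1) by (simp add: isCont_def filterlim_at_split)
  show "eventually (\<lambda>r. 0 \<le> f r) (at_left s)"
    using eventually_at_left_real[OF assms(2)] by eventually_elim (auto intro: less_imp_le assms(3))
qed (simp add: trivial_limit_at_left_real)

lemma deriv_nonpos_if_pos_on_left:
  fixes f :: "real \<Rightarrow> real"
  assumes "(f has_real_derivative D) (at s)" "a < s" "\<And>r. a < r \<Longrightarrow> r < s \<Longrightarrow> f r > 0" "f s \<le> 0"
  shows "D \<le> 0"
proof (rule ccontr)
  assume "\<not> D \<le> 0"
  then obtain d where "d > 0" and dec: "\<And>h. h > 0 \<Longrightarrow> h < d \<Longrightarrow> f (s - h) < f s"
    using DERIV_pos_inc_left[OF assms(1)] by force
  define h where "h = min (d / 2) ((s - a) / 2)"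
  have "0 < h" "h < d" "h < s - a" using \<open>d > 0\<close> assms(2) by (simp_all add: h_def min_less_iff_disj)
  then have "f (s - h) < f s" "f (s - h) > 0" using dec[of h] assms(3)[of "s - h"] by simp_all
  with assms(4) show False by simp
qed

lemma stays_positive_if_increasing_at_zeros:
  fixes g g' :: "'i \<Rightarrow> real \<Rightarrow> real"
  assumes "finite I"
    and der: "\<And>i t. i \<in> I \<Longrightarrow> 0 \<le> t \<Longrightarrow> t \<le> T \<Longrightarrow> (g i has_real_derivative g' i t) (at t within {0..})"
    and init: "\<And>i. i \<in> I \<Longrightarrow> g i 0 > 0"
    and increasing: "\<And>i t. i \<in> I \<Longrightarrow> 0 < t \<Longrightarrow> t \<le> T \<Longrightarrow> (\<forall>j\<in>I. g j t \<ge> 0) \<Longrightarrow> g i t = 0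
      \<Longrightarrow> g' i t > 0"
    and "i \<in> I" "0 \<le> t" "t \<le> T"
  shows "g i t > 0"
proof (rule ccontr)
  assume "\<not> g i t > 0"
  \<comment> \<open>look at the first time s at which some g k vanishes\<close>
  define F where "F = (\<Union>i\<in>I. {t \<in> {0..T}. g i t \<le> 0})"
  have "continuous_on {0..T} (g j)" if "j \<in> I" for j
    using der[OF that] by (intro continuous_on_of_has_real_derivative_within_atLeast[where a = 0]) auto
  then have "closed F"
    unfolding F_def using \<open>finite I\<close>
    by (intro closed_UN ballI continuous_on_closed_Collect_le[OF _ continuous_on_const closed_atLeastAtMost]) auto
  moreover have "t \<in> F"
    unfolding F_def using \<open>\<not> g i t > 0\<close> assms(5-7) by (intro UN_I[of i]) auto
  then have "F \<noteq> {}" by blast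
  moreover have "bdd_below F" unfolding F_def by (rule bdd_belowI[of _ 0]) auto
  ultimately have "Inf F \<in> F" by (intro closed_contains_Inf)
  define s where "s = Inf F"
  from \<open>Inf F \<in> F\<close> obtain k where k: "k \<in> I" "0 \<le> s" "s \<le> T" "g k s \<le> 0"
    by (auto simp: F_def s_def)
  have before: "g j r > 0" if "j \<in> I" "0 \<le> r" "r < s" for j r
  proof (rule ccontr)
    assume "\<not> g j r > 0"
    then have "r \<in> F" unfolding F_def using that k by (intro UN_I[of j]) auto
    then have "s \<le> r" unfolding s_def using \<open>bdd_below F\<close> by (rule cInf_lower)
    with \<open>r < s\<close> show False by simp
  qed
  have "s \<noteq> 0" using init[OF k(1)] k(4) by auto
  with k(2) have "s > 0" by simp
  have der_at: "(g j has_real_derivative g' j s) (at s)" if "j \<in> I" for j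
    using has_real_derivative_at_of_within_atLeast[OF der[OF that k(2,3)] \<open>s > 0\<close>] .
  have "g j s \<ge> 0" if "j \<in> I" for j
    using \<open>s > 0\<close> before[OF that] by (intro nonneg_if_isCont_pos_on_left[OF DERIV_isCont[OF der_at[OF that]]]) auto
  with k have "g' k s > 0"
    using increasing[OF k(1) \<open>s > 0\<close> k(3)] by force
  moreover have "g' k s \<le> 0"
    using \<open>s > 0\<close> before[OF k(1)] k(4) by (intro deriv_nonpos_if_pos_on_left[OF der_at[OF k(1)]]) auto
  ultimately show False by simp
qed

lemma quasi_positive_system_nonneg:
  fixes x x' :: "'i \<Rightarrow> real \<Rightarrow> real"
  assumes "finite I" "L \<ge> 0"
    and der: "\<And>i t. i \<in> I \<Longrightarrow> 0 \<le> t \<Longrightarrow> t \<le> T \<Longrightarrow> (x i has_real_derivative x' i t) (at t within {0..})"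
    and init: "\<And>i. i \<in> I \<Longrightarrow> x i 0 \<ge> 0"
    and quasi_positive: "\<And>i t e. i \<in> I \<Longrightarrow> 0 < t \<Longrightarrow> t \<le> T \<Longrightarrow> e > 0 \<Longrightarrow> (\<forall>j\<in>I. x j t \<ge> -e)
               \<Longrightarrow> x i t = -e \<Longrightarrow> x' i t \<ge> -(L * e)"
    and "i \<in> I" "0 \<le> t" "t \<le> T"
  shows "x i t \<ge> 0"
proof (rule ccontr)
  assume "\<not> x i t \<ge> 0"
  define \<epsilon> where "\<epsilon> = - x i t / exp ((L + 1) * t)"
  have "\<epsilon> > 0" using \<open>\<not> x i t \<ge> 0\<close> by (simp add: \<epsilon>_def divide_neg_pos)
  define g where "g j s = x j s + \<epsilon> * exp ((L + 1) * s)" for j s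
  have "g i t > 0"
  proof (rule stays_positive_if_increasing_at_zeros[OF \<open>finite I\<close>,
      where g = g and g' = "\<lambda>j s. x' j s + \<epsilon> * ((L + 1) * exp ((L + 1) * s))"])
    show "(g j has_real_derivative x' j s + \<epsilon> * ((L + 1) * exp ((L + 1) * s))) (at s within {0..})"
      if "j \<in> I" "0 \<le> s" "s \<le> T" for j s
      unfolding g_def[abs_def] using der[OF that] by (auto intro!: derivative_eq_intros)
    show "g j 0 > 0" if "j \<in> I" for j
      using init[OF that] \<open>\<epsilon> > 0\<close> by (simp add: g_def)
    show "x' j s + \<epsilon> * ((L + 1) * exp ((L + 1) * s)) > 0"
      if "j \<in> I" "0 < s" "s \<le> T" "\<forall>k\<in>I. g k s \<ge> 0" "g j s = 0" for j s
    proof -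
      define e where "e = \<epsilon> * exp ((L + 1) * s)"
      have "e > 0" using \<open>\<epsilon> > 0\<close> by (simp add: e_def)
      moreover have "x' j s \<ge> -(L * e)"
        using that \<open>e > 0\<close> by (intro quasi_positive) (auto simp: g_def e_def add_eq_0_iff2 add.commute neg_le_iff_le)
      moreover have "\<epsilon> * ((L + 1) * exp ((L + 1) * s)) = L * e + e" by (simp add: e_def algebra_simps)
      ultimately show ?thesis by linarith
    qed
  qed (use assms in auto)
  then show False by (simp add: g_def \<epsilon>_def)
qed

lemma stays_below_if_deriv_nonpos_above:
  fixes u u' :: "real \<Rightarrow> real"
  assumes der: "\<And>t. t \<ge> t\<^sub>0 \<Longrightarrow> (u has_real_derivative u' t) (at t)"
    and nonpos: "\<And>t. t \<ge> t\<^sub>0 \<Longrightarrow> u t \<ge> a \<Longrightarrow> u' t \<le> 0"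
    and start: "t1 \<ge> t\<^sub>0" "u t1 \<le> a"
    and "t2 \<ge> t1"
  shows "u t2 \<le> a"
proof (rule ccontr)
  assume "\<not> u t2 \<le> a"
  have cont: "continuous_on {t1..t2} u"
    using start(1) by (intro continuous_at_imp_continuous_on ballI DERIV_isCont[OF der]) auto
  define F where "F = {s \<in> {t1..t2}. u s \<le> a}"
  have "closed F"
    unfolding F_def by (rule continuous_on_closed_Collect_le[OF cont continuous_on_const closed_atLeastAtMost])
  moreover have "F \<noteq> {}" using start \<open>t2 \<ge> t1\<close> by (auto simp: F_def)
  moreover have "bdd_above F" by (auto simp: F_def bdd_above_def)
  ultimately have "Sup F \<in> F" by (intro closed_contains_Sup)
  define s where "s = Sup F"
  from \<open>Sup F \<in> F\<close> have s: "t1 \<le> s" "s \<le> t2" "u s \<le> a" by (auto simp: F_def s_def)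
  have above: "u r > a" if "s < r" "r \<le> t2" for r
  proof (rule ccontr)
    assume "\<not> u r > a"
    then have "r \<in> F" using that s by (auto simp: F_def)
    then have "r \<le> s" unfolding s_def using \<open>bdd_above F\<close> by (rule cSup_upper)
    with \<open>s < r\<close> show False by simp
  qed
  have "u t2 \<le> u s"
  proof (rule DERIV_nonpos_imp_decreasing_open[OF s(2)])
    fix r assume "s < r" "r < t2"
    then show "\<exists>y. (u has_real_derivative y) (at r) \<and> y \<le> 0"
      using der[of r] nonpos[of r] above[of r] s start by (intro exI[of _ "u' r"]) auto
  qed (use cont s in \<open>auto intro: continuous_on_subset\<close>)
  with s(3) \<open>\<not> u t2 \<le> a\<close> show False by simp
qed

lemma eventually_below_if_deriv_le_neg_above:
  fixes u u' :: "real \<Rightarrow> real"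
  assumes der: "\<And>t. t \<ge> t\<^sub>0 \<Longrightarrow> (u has_real_derivative u' t) (at t)"
    and "c > 0"
    and decrease: "\<And>t. t \<ge> t\<^sub>0 \<Longrightarrow> u t \<ge> a \<Longrightarrow> u' t \<le> -c"
  shows "\<exists>T. \<forall>t\<ge>T. u t \<le> a"
proof -
  define T1 where "T1 = t\<^sub>0 + max 0 ((u t\<^sub>0 - a) / c) + 1"
  have "T1 > t\<^sub>0" by (simp add: T1_def)
  have "\<exists>t1\<in>{t\<^sub>0..T1}. u t1 \<le> a"
  proof (rule ccontr)
    assume "\<not> ?thesis"
    then have above: "u t > a" if "t\<^sub>0 \<le> t" "t \<le> T1" for t
      using that by force
    have "u T1 + c * T1 \<le> u t\<^sub>0 + c * t\<^sub>0"
    proof (rule DERIV_nonpos_imp_decreasing_open[of t\<^sub>0 T1 "\<lambda>t. u t + c * t"])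
      fix x assume "t\<^sub>0 < x" "x < T1"
      then show "\<exists>y. ((\<lambda>t. u t + c * t) has_real_derivative y) (at x) \<and> y \<le> 0"
        using above[of x] decrease[of x]
        by (intro exI[of _ "u' x + c"]) (auto intro!: derivative_eq_intros der)
    next
      show "continuous_on {t\<^sub>0..T1} (\<lambda>t. u t + c * t)"
        by (intro continuous_at_imp_continuous_on ballI continuous_intros DERIV_isCont[OF der]) auto
    qed (use \<open>T1 > t\<^sub>0\<close> in simp)
    moreover have "c * (T1 - t\<^sub>0) \<ge> u t\<^sub>0 - a + c"
    proof -
      have "c * (T1 - t\<^sub>0) \<ge> c * ((u t\<^sub>0 - a) / c + 1)"
        using \<open>c > 0\<close> unfolding T1_def by (intro mult_left_mono) auto
      also have "c * ((u t\<^sub>0 - a) / c + 1) = u t\<^sub>0 - a + c"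
        using \<open>c > 0\<close> by (simp add: field_simps)
      finally show ?thesis .
    qed
    ultimately show False using above[of T1] \<open>T1 > t\<^sub>0\<close> \<open>c > 0\<close> by (simp add: algebra_simps)
  qed
  then obtain t1 where "t\<^sub>0 \<le> t1" "u t1 \<le> a" by auto
  have "u t \<le> a" if "t \<ge> t1" for t
  proof (rule stays_below_if_deriv_nonpos_above[OF der _ \<open>t\<^sub>0 \<le> t1\<close> \<open>u t1 \<le> a\<close> that])
    show "u' s \<le> 0" if "s \<ge> t\<^sub>0" "u s \<ge> a" for s
      using decrease[OF that] \<open>c > 0\<close> by simp
  qed
  then show ?thesis by blast
qed

lemma mult_ge_neg_bound:
  fixes a d e M :: real
  assumes "a \<ge> -e" "d \<ge> -e" "\<bar>a\<bar> \<le> M" "\<bar>d\<bar> \<le> M" "e > 0"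
  shows "a * d \<ge> -(M * e)"
proof -
  have mixed_signs: "x * y \<ge> -(M * e)" if "x \<ge> -e" "x < 0" "y \<ge> 0" "\<bar>y\<bar> \<le> M" for x y
  proof -
    have "x * y \<ge> (-e) * y" using that by (intro mult_right_mono) auto
    moreover have "(-e) * y \<ge> (-e) * M" using that assms(5) by (intro mult_left_mono_neg) auto
    ultimately show ?thesis by (simp add: mult.commute)
  qed
  have "M * e \<ge> 0" using assms(3,5) by simp
  consider "a \<ge> 0 \<longleftrightarrow> d \<ge> 0" | "a < 0" "d \<ge> 0" | "a \<ge> 0" "d < 0" by linarith
  then show ?thesis
  proof cases
    case 1
    then have "a * d \<ge> 0" by (cases "a \<ge> 0") (auto simp: zero_le_mult_iff)
    with \<open>M * e \<ge> 0\<close> show ?thesis by linarith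
  next
    case 2
    with mixed_signs[of a d] assms show ?thesis by simp
  next
    case 3
    with mixed_signs[of d a] assms show ?thesis by (simp add: mult.commute)
  qed
qed

lemma mult_neg_add_ge:
  fixes c x p C D e L :: real
  assumes "\<bar>c\<bar> \<le> C" "x = -e" "e > 0" "p \<ge> -(D * e)" "C + D \<le> L"
  shows "c * x + p \<ge> -(L * e)"
proof -
  have "c * x \<ge> -(C * e)"
    using assms(1-3) mult_right_mono[of c C e] mult_right_mono[of "-c" C e] by (auto simp: abs_le_iff)
  moreover have "(C + D) * e \<le> L * e" using assms(3,5) by (intro mult_right_mono) auto
  ultimately show ?thesis using assms(4) by (simp add: algebra_simps)
qed

lemma exp_decay_tendsto_zero: "(\<delta>::real) > 0 \<Longrightarrow> ((\<lambda>t. C * exp (-\<delta> * t)) \<longlongrightarrow> 0) at_top"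
  by (intro tendsto_mult_right_zero filterlim_compose[OF exp_at_bot]
      filterlim_tendsto_neg_mult_at_bot[OF tendsto_const _ filterlim_ident]) simp

lemma pos_of_deriv_ge_neg_mult:
  fixes f f' :: "real \<Rightarrow> real"
  assumes "0 \<le> t" "f 0 > 0"
    and cont: "continuous_on {0..t} f"
    and der: "\<And>s. 0 < s \<Longrightarrow> s < t \<Longrightarrow> (f has_real_derivative f' s) (at s)"
    and growth: "\<And>s. 0 < s \<Longrightarrow> s < t \<Longrightarrow> f' s \<ge> -(C * f s)"
  shows "f t > 0"
proof -
  have "f 0 * exp (C * 0) \<le> f t * exp (C * t)"
  proof (rule DERIV_nonneg_imp_increasing_open[OF \<open>0 \<le> t\<close>])
    fix s assume "0 < s" "s < t"
    have "((\<lambda>s. f s * exp (C * s)) has_real_derivative exp (C * s) * (f' s + C * f s)) (at s)"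
      using der[OF \<open>0 < s\<close> \<open>s < t\<close>] by (auto intro!: derivative_eq_intros simp: algebra_simps)
    moreover have "exp (C * s) * (f' s + C * f s) \<ge> 0"
      using growth[OF \<open>0 < s\<close> \<open>s < t\<close>] by simp
    ultimately show "\<exists>y. ((\<lambda>s. f s * exp (C * s)) has_real_derivative y) (at s) \<and> y \<ge> 0" by blast
  qed (intro continuous_intros cont)
  with \<open>f 0 > 0\<close> have "f t * exp (C * t) > 0" by simp
  then show ?thesis by (simp add: zero_less_mult_iff)
qed

lemma logistic_excess_bound:
  fixes k X n \<epsilon> :: real
  assumes "k > 0" "X \<ge> 0" "\<epsilon> > 0" "X + \<epsilon> \<le> n"
  shows "k * (X - n) * n \<le> -(k * (X + \<epsilon>) * \<epsilon>)"
proof -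
  have "(X - n) * n \<le> -\<epsilon> * n" using assms by (intro mult_right_mono) auto
  also have "\<dots> \<le> -\<epsilon> * (X + \<epsilon>)" using assms by (intro mult_left_mono_neg) auto
  finally show ?thesis using mult_left_mono[of "(X - n) * n" "-\<epsilon> * (X + \<epsilon>)" k] assms(1)
    by (simp add: algebra_simps)
qed

locale coinfection_model =
  fixes b K \<alpha>1 \<alpha>2 \<alpha>3 \<beta>1 \<beta>2 \<gamma>1 \<gamma>2 \<eta>1 \<eta>2 \<rho>1 \<rho>2 \<rho>3 :: real
    and \<mu>0 \<mu>1' \<mu>2' \<mu>3' \<mu>4' \<mu>1 \<mu>2 \<mu>3 :: real
    and S I1 I2 I12 R :: "real \<Rightarrow> real"
  assumes pos: "b > 0" "K > 0" "\<alpha>1 > 0" "\<alpha>2 > 0" "\<alpha>3 > 0" "\<beta>1 > 0" "\<beta>2 > 0"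
      "\<gamma>1 > 0" "\<gamma>2 > 0" "\<eta>1 > 0" "\<eta>2 > 0" "\<rho>1 > 0" "\<rho>2 > 0" "\<rho>3 > 0"
      "\<mu>0 > 0" "\<mu>1' > 0" "\<mu>2' > 0" "\<mu>3' > 0" "\<mu>4' > 0"
    and mu_def: "\<mu>1 = \<rho>1 + \<mu>1'" "\<mu>2 = \<rho>2 + \<mu>2'" "\<mu>3 = \<rho>3 + \<mu>3'"
    and dS: "\<And>t. t \<ge> 0 \<Longrightarrow> (S has_real_derivative
        ((b * (1 - (S t + I1 t + I2 t + I12 t + R t) / K) - \<alpha>1 * I1 t - \<alpha>2 * I2 t
          - (\<beta>1 + \<beta>2 + \<alpha>3) * I12 t - \<mu>0) * S t)) (at t within {0..})"
    and dI1: "\<And>t. t \<ge> 0 \<Longrightarrow> (I1 has_real_derivative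
        ((b * (1 - (S t + I1 t + I2 t + I12 t + R t) / K) + \<alpha>1 * S t - \<eta>1 * I12 t
          - \<gamma>1 * I2 t - \<mu>1) * I1 t + \<beta>1 * S t * I12 t)) (at t within {0..})"
    and dI2: "\<And>t. t \<ge> 0 \<Longrightarrow> (I2 has_real_derivative
        ((b * (1 - (S t + I1 t + I2 t + I12 t + R t) / K) + \<alpha>2 * S t - \<eta>2 * I12 t
          - \<gamma>2 * I1 t - \<mu>2) * I2 t + \<beta>2 * S t * I12 t)) (at t within {0..})"
    and dI12: "\<And>t. t \<ge> 0 \<Longrightarrow> (I12 has_real_derivative
        ((b * (1 - (S t + I1 t + I2 t + I12 t + R t) / K) + \<alpha>3 * S t + \<eta>1 * I1 t
          + \<eta>2 * I2 t - \<mu>3) * I12 t + (\<gamma>1 + \<gamma>2) * I1 t * I2 t)) (at t within {0..})"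
    and dR: "\<And>t. t \<ge> 0 \<Longrightarrow> (R has_real_derivative
        ((b * (1 - (S t + I1 t + I2 t + I12 t + R t) / K) - \<mu>4') * R t
          + \<rho>1 * I1 t + \<rho>2 * I2 t + \<rho>3 * I12 t)) (at t within {0..})"
    and init: "S 0 > 0" "I1 0 \<ge> 0" "I2 0 \<ge> 0" "I12 0 \<ge> 0" "R 0 \<ge> 0"
begin

definition N :: "real \<Rightarrow> real" where "N t = S t + I1 t + I2 t + I12 t + R t"

definition V :: "real \<Rightarrow> real" where "V t = I1 t + I2 t + I12 t + R t"

definition birth_rate :: "real \<Rightarrow> real" where "birth_rate t = b * (1 - N t / K)"

definition rate_S :: "real \<Rightarrow> real"
  where "rate_S t = birth_rate t - \<alpha>1 * I1 t - \<alpha>2 * I2 t - (\<beta>1 + \<beta>2 + \<alpha>3) * I12 t - \<mu>0"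

definition rate_I1 :: "real \<Rightarrow> real"
  where "rate_I1 t = birth_rate t + \<alpha>1 * S t - \<eta>1 * I12 t - \<gamma>1 * I2 t - \<mu>1"

definition rate_I2 :: "real \<Rightarrow> real"
  where "rate_I2 t = birth_rate t + \<alpha>2 * S t - \<eta>2 * I12 t - \<gamma>2 * I1 t - \<mu>2"

definition rate_I12 :: "real \<Rightarrow> real"
  where "rate_I12 t = birth_rate t + \<alpha>3 * S t + \<eta>1 * I1 t + \<eta>2 * I2 t - \<mu>3"

definition rate_R :: "real \<Rightarrow> real" where "rate_R t = birth_rate t - \<mu>4'"

lemma N_eq_S_plus_V: "N t = S t + V t"
  by (simp add: N_def V_def)

lemma compartments_has_derivative:
  assumes "t \<ge> 0"
  shows "(S has_real_derivative rate_S t * S t) (at t within {0..})"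
    and "(I1 has_real_derivative rate_I1 t * I1 t + \<beta>1 * S t * I12 t) (at t within {0..})"
    and "(I2 has_real_derivative rate_I2 t * I2 t + \<beta>2 * S t * I12 t) (at t within {0..})"
    and "(I12 has_real_derivative rate_I12 t * I12 t + (\<gamma>1 + \<gamma>2) * I1 t * I2 t) (at t within {0..})"
    and "(R has_real_derivative rate_R t * R t + \<rho>1 * I1 t + \<rho>2 * I2 t + \<rho>3 * I12 t) (at t within {0..})"
  using dS[OF assms] dI1[OF assms] dI2[OF assms] dI12[OF assms] dR[OF assms]
  by (simp_all add: rate_S_def rate_I1_def rate_I2_def rate_I12_def rate_R_def birth_rate_def N_def)

lemma compartments_has_derivative_at:
  assumes "t > 0"
  shows "(S has_real_derivative rate_S t * S t) (at t)"
    and "(I1 has_real_derivative rate_I1 t * I1 t + \<beta>1 * S t * I12 t) (at t)"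
    and "(I2 has_real_derivative rate_I2 t * I2 t + \<beta>2 * S t * I12 t) (at t)"
    and "(I12 has_real_derivative rate_I12 t * I12 t + (\<gamma>1 + \<gamma>2) * I1 t * I2 t) (at t)"
    and "(R has_real_derivative rate_R t * R t + \<rho>1 * I1 t + \<rho>2 * I2 t + \<rho>3 * I12 t) (at t)"
  using compartments_has_derivative[of t] assms
  by (auto intro: has_real_derivative_at_of_within_atLeast)

lemma continuous_on_compartments:
  "continuous_on {0..T} S" "continuous_on {0..T} I1" "continuous_on {0..T} I2"
  "continuous_on {0..T} I12" "continuous_on {0..T} R"
  by (rule continuous_on_of_has_real_derivative_within_atLeast[where a = 0];
      auto intro: compartments_has_derivative)+

lemma continuous_on_rates:
  "continuous_on {0..T} rate_S" "continuous_on {0..T} rate_I1" "continuous_on {0..T} rate_I2"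
  "continuous_on {0..T} rate_I12" "continuous_on {0..T} rate_R"
proof -
  note cont = continuous_on_compartments pos(2)
  note defs = birth_rate_def N_def
  show "continuous_on {0..T} rate_S" unfolding rate_S_def[abs_def] defs
    using cont by (intro continuous_intros) auto
  show "continuous_on {0..T} rate_I1" unfolding rate_I1_def[abs_def] defs
    using cont by (intro continuous_intros) auto
  show "continuous_on {0..T} rate_I2" unfolding rate_I2_def[abs_def] defs
    using cont by (intro continuous_intros) auto
  show "continuous_on {0..T} rate_I12" unfolding rate_I12_def[abs_def] defs
    using cont by (intro continuous_intros) auto
  show "continuous_on {0..T} rate_R" unfolding rate_R_def[abs_def] defs
    using cont by (intro continuous_intros) auto
qed

lemma continuous_on_compartments_abs_sum:
  "continuous_on {0..T} (\<lambda>s. \<bar>S s\<bar> + \<bar>I1 s\<bar> + \<bar>I2 s\<bar> + \<bar>I12 s\<bar> + \<bar>R s\<bar>)"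
  by (intro continuous_intros continuous_on_compartments)

lemma continuous_on_rates_abs_sum:
  "continuous_on {0..T} (\<lambda>s. \<bar>rate_S s\<bar> + \<bar>rate_I1 s\<bar> + \<bar>rate_I2 s\<bar> + \<bar>rate_I12 s\<bar> + \<bar>rate_R s\<bar>)"
  by (intro continuous_intros continuous_on_rates)

lemma quasi_positive_at:
  assumes M: "\<bar>S s\<bar> + \<bar>I1 s\<bar> + \<bar>I2 s\<bar> + \<bar>I12 s\<bar> + \<bar>R s\<bar> \<le> M"
    and C: "\<bar>rate_S s\<bar> + \<bar>rate_I1 s\<bar> + \<bar>rate_I2 s\<bar> + \<bar>rate_I12 s\<bar> + \<bar>rate_R s\<bar> \<le> C"
    and e: "e > 0" and ge: "S s \<ge> -e" "I1 s \<ge> -e" "I2 s \<ge> -e" "I12 s \<ge> -e" "R s \<ge> -e"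
  defines "L \<equiv> C + (\<beta>1 + \<beta>2 + \<gamma>1 + \<gamma>2) * M + (\<rho>1 + \<rho>2 + \<rho>3)"
  shows "S s = -e \<Longrightarrow> rate_S s * S s + 0 \<ge> -(L * e)"
    and "I1 s = -e \<Longrightarrow> rate_I1 s * I1 s + \<beta>1 * S s * I12 s \<ge> -(L * e)"
    and "I2 s = -e \<Longrightarrow> rate_I2 s * I2 s + \<beta>2 * S s * I12 s \<ge> -(L * e)"
    and "I12 s = -e \<Longrightarrow> rate_I12 s * I12 s + (\<gamma>1 + \<gamma>2) * I1 s * I2 s \<ge> -(L * e)"
    and "R s = -e \<Longrightarrow> rate_R s * R s + (\<rho>1 * I1 s + \<rho>2 * I2 s + \<rho>3 * I12 s) \<ge> -(L * e)"
proof -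
  have "M \<ge> 0" using M by linarith
  then have nonneg: "\<beta>1 * M \<ge> 0" "\<beta>2 * M \<ge> 0" "(\<gamma>1 + \<gamma>2) * M \<ge> 0" using pos by simp_all
  have L: "C + \<beta>1 * M \<le> L" "C + \<beta>2 * M \<le> L" "C + (\<gamma>1 + \<gamma>2) * M \<le> L" "C + 0 \<le> L"
    "C + (\<rho>1 + \<rho>2 + \<rho>3) \<le> L"
    using nonneg pos by (simp_all add: L_def algebra_simps)
  have SI12: "S s * I12 s \<ge> -(M * e)" and I1I2: "I1 s * I2 s \<ge> -(M * e)"
    using M e ge by (intro mult_ge_neg_bound; linarith)+
  have src: "\<beta>1 * S s * I12 s \<ge> -(\<beta>1 * M * e)" "\<beta>2 * S s * I12 s \<ge> -(\<beta>2 * M * e)"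
    "(\<gamma>1 + \<gamma>2) * I1 s * I2 s \<ge> -((\<gamma>1 + \<gamma>2) * M * e)"
    "\<rho>1 * I1 s + \<rho>2 * I2 s + \<rho>3 * I12 s \<ge> -((\<rho>1 + \<rho>2 + \<rho>3) * e)"
    using mult_left_mono[OF SI12, of \<beta>1] mult_left_mono[OF SI12, of \<beta>2]
      mult_left_mono[OF I1I2, of "\<gamma>1 + \<gamma>2"] mult_left_mono[OF ge(2), of \<rho>1]
      mult_left_mono[OF ge(3), of \<rho>2] mult_left_mono[OF ge(4), of \<rho>3] pos
    by (simp_all add: mult.assoc algebra_simps)
  have rates: "\<bar>rate_S s\<bar> \<le> C" "\<bar>rate_I1 s\<bar> \<le> C" "\<bar>rate_I2 s\<bar> \<le> C" "\<bar>rate_I12 s\<bar> \<le> C"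
    "\<bar>rate_R s\<bar> \<le> C" using C by linarith+
  show "S s = -e \<Longrightarrow> rate_S s * S s + 0 \<ge> -(L * e)"
    using mult_neg_add_ge[OF rates(1) _ e _ L(4), where p = 0] by simp
  show "I1 s = -e \<Longrightarrow> rate_I1 s * I1 s + \<beta>1 * S s * I12 s \<ge> -(L * e)"
    using mult_neg_add_ge[OF rates(2) _ e src(1) L(1)] by simp
  show "I2 s = -e \<Longrightarrow> rate_I2 s * I2 s + \<beta>2 * S s * I12 s \<ge> -(L * e)"
    using mult_neg_add_ge[OF rates(3) _ e src(2) L(2)] by simp
  show "I12 s = -e \<Longrightarrow> rate_I12 s * I12 s + (\<gamma>1 + \<gamma>2) * I1 s * I2 s \<ge> -(L * e)"
    using mult_neg_add_ge[OF rates(4) _ e src(3) L(3)] by simp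
  show "R s = -e \<Longrightarrow> rate_R s * R s + (\<rho>1 * I1 s + \<rho>2 * I2 s + \<rho>3 * I12 s) \<ge> -(L * e)"
    using mult_neg_add_ge[OF rates(5) _ e src(4) L(5)] by simp
qed

lemma compartments_nonneg:
  assumes "t \<ge> 0"
  shows "S t \<ge> 0 \<and> I1 t \<ge> 0 \<and> I2 t \<ge> 0 \<and> I12 t \<ge> 0 \<and> R t \<ge> 0"
proof -
  obtain M C where M: "\<forall>s\<in>{0..t}. \<bar>S s\<bar> + \<bar>I1 s\<bar> + \<bar>I2 s\<bar> + \<bar>I12 s\<bar> + \<bar>R s\<bar> \<le> M"
    and C: "\<forall>s\<in>{0..t}. \<bar>rate_S s\<bar> + \<bar>rate_I1 s\<bar> + \<bar>rate_I2 s\<bar> + \<bar>rate_I12 s\<bar> + \<bar>rate_R s\<bar> \<le> C"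
    using continuous_on_Icc_bounded_above[OF continuous_on_compartments_abs_sum]
      continuous_on_Icc_bounded_above[OF continuous_on_rates_abs_sum] by blast
  define L where "L = C + (\<beta>1 + \<beta>2 + \<gamma>1 + \<gamma>2) * M + (\<rho>1 + \<rho>2 + \<rho>3)"
  have "0 \<le> \<bar>S 0\<bar> + \<bar>I1 0\<bar> + \<bar>I2 0\<bar> + \<bar>I12 0\<bar> + \<bar>R 0\<bar>"
    "0 \<le> \<bar>rate_S 0\<bar> + \<bar>rate_I1 0\<bar> + \<bar>rate_I2 0\<bar> + \<bar>rate_I12 0\<bar> + \<bar>rate_R 0\<bar>" by simp_all
  then have "M \<ge> 0" "C \<ge> 0" using M C assms by (meson atLeastAtMost_iff order_refl order_trans)+
  then have "L \<ge> 0" using pos by (simp add: L_def)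
  define x where "x i = [S, I1, I2, I12, R] ! i" for i :: nat
  define x' where "x' i s = [rate_S s * S s + 0,
      rate_I1 s * I1 s + \<beta>1 * S s * I12 s,
      rate_I2 s * I2 s + \<beta>2 * S s * I12 s,
      rate_I12 s * I12 s + (\<gamma>1 + \<gamma>2) * I1 s * I2 s,
      rate_R s * R s + (\<rho>1 * I1 s + \<rho>2 * I2 s + \<rho>3 * I12 s)] ! i" for i s
  have "x i t \<ge> 0" if "i \<in> {0, 1, 2, 3, 4}" for i
  proof (rule quasi_positive_system_nonneg[where x = x and x' = x' and L = L and T = t])
    show "(x j has_real_derivative x' j s) (at s within {0..})"
      if "j \<in> {0, 1, 2, 3, 4}" "0 \<le> s" "s \<le> t" for j s
      using that compartments_has_derivative[OF \<open>0 \<le> s\<close>] by (auto simp: x_def x'_def add.assoc)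
    show "x j 0 \<ge> 0" if "j \<in> {0, 1, 2, 3, 4}" for j
      using that init by (auto simp: x_def)
    show "x' j s \<ge> -(L * e)"
      if "j \<in> {0, 1, 2, 3, 4}" "0 < s" "s \<le> t" "e > 0"
        "\<forall>k\<in>{0, 1, 2, 3, 4}. x k s \<ge> -e" "x j s = -e" for j s e
    proof -
      have "S s \<ge> -e" "I1 s \<ge> -e" "I2 s \<ge> -e" "I12 s \<ge> -e" "R s \<ge> -e"
        using that(5) by (auto simp: x_def)
      note bounds = quasi_positive_at[OF M[rule_format] C[rule_format] \<open>e > 0\<close> this, folded L_def]
      show ?thesis
        using that(1-3,6) bounds by (auto simp: x_def x'_def)
    qed
  qed (use that assms \<open>L \<ge> 0\<close> in auto)
  from this[of 0] this[of 1] this[of 2] this[of 3] this[of 4] show ?thesis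
    by (simp add: x_def)
qed

lemma S_pos:
  assumes "t \<ge> 0"
  shows "S t > 0"
proof -
  have "continuous_on {0..t} (\<lambda>s. \<bar>rate_S s\<bar>)"
    by (intro continuous_intros continuous_on_rates)
  then obtain C where C: "\<forall>s\<in>{0..t}. \<bar>rate_S s\<bar> \<le> C"
    using continuous_on_Icc_bounded_above by blast
  show ?thesis
  proof (rule pos_of_deriv_ge_neg_mult[OF assms init(1) continuous_on_compartments(1),
        where f' = "\<lambda>s. rate_S s * S s" and C = C])
    fix s assume "0 < s" "s < t"
    then show "(S has_real_derivative rate_S s * S s) (at s)"
      by (intro compartments_has_derivative_at) simp
    have "-C \<le> rate_S s" using C[rule_format, of s] \<open>0 < s\<close> \<open>s < t\<close> by (simp add: abs_le_iff)
    moreover have "S s \<ge> 0" using compartments_nonneg[of s] \<open>0 < s\<close> by simp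
    ultimately show "rate_S s * S s \<ge> -(C * S s)"
      using mult_right_mono by fastforce
  qed
qed

lemma N_has_derivative_at:
  assumes "t > 0"
  shows "(N has_real_derivative birth_rate t * N t
      - \<mu>0 * S t - \<mu>1' * I1 t - \<mu>2' * I2 t - \<mu>3' * I12 t - \<mu>4' * R t) (at t)"
proof -
  note d = compartments_has_derivative_at[OF assms]
  have "(N has_real_derivative rate_S t * S t + (rate_I1 t * I1 t + \<beta>1 * S t * I12 t)
      + (rate_I2 t * I2 t + \<beta>2 * S t * I12 t) + (rate_I12 t * I12 t + (\<gamma>1 + \<gamma>2) * I1 t * I2 t)
      + (rate_R t * R t + \<rho>1 * I1 t + \<rho>2 * I2 t + \<rho>3 * I12 t)) (at t)"
    unfolding N_def[abs_def] using DERIV_add[OF DERIV_add[OF DERIV_add[OF DERIV_add[OF d(1) d(2)] d(3)] d(4)] d(5)] .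
  then show ?thesis
    by (rule DERIV_cong)
      (unfold rate_S_def rate_I1_def rate_I2_def rate_I12_def rate_R_def N_def, simp add: mu_def algebra_simps)
qed

definition ratio_drift :: "real \<Rightarrow> real"
  where "ratio_drift t = N t * (\<alpha>1 * I1 t + \<alpha>2 * I2 t + (\<alpha>3 + \<beta>1 + \<beta>2) * I12 t)
    - (\<mu>1' - \<mu>0) * I1 t - (\<mu>2' - \<mu>0) * I2 t - (\<mu>3' - \<mu>0) * I12 t - (\<mu>4' - \<mu>0) * R t"

lemma V_div_S_has_derivative_at:
  assumes "t > 0"
  shows "((\<lambda>s. V s / S s) has_real_derivative ratio_drift t / S t) (at t)"
proof -
  note d = compartments_has_derivative_at[OF assms]
  define V' where "V' = rate_I1 t * I1 t + \<beta>1 * S t * I12 t + (rate_I2 t * I2 t + \<beta>2 * S t * I12 t)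
      + (rate_I12 t * I12 t + (\<gamma>1 + \<gamma>2) * I1 t * I2 t) + (rate_R t * R t + \<rho>1 * I1 t + \<rho>2 * I2 t + \<rho>3 * I12 t)"
  have "(V has_real_derivative V') (at t)"
    unfolding V_def[abs_def] V'_def using DERIV_add[OF DERIV_add[OF DERIV_add[OF d(2) d(3)] d(4)] d(5)] .
  moreover have "S t > 0" using S_pos assms by simp
  ultimately have "((\<lambda>s. V s / S s) has_real_derivative (V' * S t - V t * (rate_S t * S t)) / (S t * S t)) (at t)"
    using DERIV_divide[OF _ d(1)] by simp
  moreover have "V' * S t - V t * (rate_S t * S t) = S t * ratio_drift t"
    unfolding V'_def rate_S_def rate_I1_def rate_I2_def rate_I12_def rate_R_def ratio_drift_def V_def N_def
    by (simp add: mu_def algebra_simps)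
  ultimately show ?thesis using \<open>S t > 0\<close> by simp
qed

lemma ratio_drift_le:
  assumes "t \<ge> 0" "N t \<le> X" "X * \<alpha>1 \<le> \<mu>1' - \<mu>0 - \<delta>" "X * \<alpha>2 \<le> \<mu>2' - \<mu>0 - \<delta>"
    "X * (\<alpha>3 + \<beta>1 + \<beta>2) \<le> \<mu>3' - \<mu>0 - \<delta>" "\<delta> \<le> \<mu>4' - \<mu>0"
  shows "ratio_drift t \<le> -(\<delta> * V t)"
proof -
  have nonneg: "S t \<ge> 0" "I1 t \<ge> 0" "I2 t \<ge> 0" "I12 t \<ge> 0" "R t \<ge> 0"
    using compartments_nonneg[OF assms(1)] by auto
  then have "N t \<ge> 0" by (simp add: N_def)
  have "N t * \<alpha>1 \<le> X * \<alpha>1" "N t * \<alpha>2 \<le> X * \<alpha>2" "N t * (\<alpha>3 + \<beta>1 + \<beta>2) \<le> X * (\<alpha>3 + \<beta>1 + \<beta>2)"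
    using assms(2) pos by (simp_all add: mult_right_mono)
  then have "(N t * \<alpha>1 - (\<mu>1' - \<mu>0) + \<delta>) * I1 t \<le> 0" "(N t * \<alpha>2 - (\<mu>2' - \<mu>0) + \<delta>) * I2 t \<le> 0"
    "(N t * (\<alpha>3 + \<beta>1 + \<beta>2) - (\<mu>3' - \<mu>0) + \<delta>) * I12 t \<le> 0" "(\<delta> - (\<mu>4' - \<mu>0)) * R t \<le> 0"
    using assms(3-6) nonneg by (intro mult_nonpos_nonneg; linarith)+
  then show ?thesis by (simp add: ratio_drift_def V_def algebra_simps)
qed

lemma V_div_S_exp_antimono:
  assumes "T0 > 0" "\<And>s. s \<ge> T0 \<Longrightarrow> N s \<le> X" "X * \<alpha>1 \<le> \<mu>1' - \<mu>0 - \<delta>" "X * \<alpha>2 \<le> \<mu>2' - \<mu>0 - \<delta>"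
    "X * (\<alpha>3 + \<beta>1 + \<beta>2) \<le> \<mu>3' - \<mu>0 - \<delta>" "\<delta> \<le> \<mu>4' - \<mu>0" "T0 \<le> t"
  shows "V t / S t * exp (\<delta> * t) \<le> V T0 / S T0 * exp (\<delta> * T0)"
proof -
  define Z where "Z s = V s / S s * exp (\<delta> * s)" for s
  have Z_deriv: "(Z has_real_derivative exp (\<delta> * s) / S s * (ratio_drift s + \<delta> * V s)) (at s)"
    if "s > 0" for s
  proof -
    have "((\<lambda>s. exp (\<delta> * s)) has_real_derivative exp (\<delta> * s) * \<delta>) (at s)"
      by (auto intro!: derivative_eq_intros)
    from DERIV_mult[OF V_div_S_has_derivative_at[OF that] this]
    show ?thesis unfolding Z_def[abs_def] by (rule DERIV_cong) (simp add: algebra_simps)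
  qed
  have "Z t \<le> Z T0"
  proof (rule DERIV_nonpos_imp_decreasing_open[OF \<open>T0 \<le> t\<close>])
    fix s assume "T0 < s" "s < t"
    then have "s > 0" "N s \<le> X" using assms(1,2) by auto
    then have "ratio_drift s \<le> -(\<delta> * V s)"
      by (intro ratio_drift_le[OF _ _ assms(3-6)]) simp_all
    moreover have "exp (\<delta> * s) / S s \<ge> 0" using S_pos[of s] \<open>s > 0\<close> by simp
    ultimately show "\<exists>y. (Z has_real_derivative y) (at s) \<and> y \<le> 0"
      using Z_deriv[OF \<open>s > 0\<close>] mult_nonneg_nonpos[of "exp (\<delta> * s) / S s"] by fastforce
  next
    show "continuous_on {T0..t} Z"
      using assms(1) by (intro continuous_at_imp_continuous_on ballI DERIV_isCont[OF Z_deriv]) auto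
  qed
  then show ?thesis by (simp add: Z_def)
qed

end

locale coinfection_model_below_threshold = coinfection_model +
  assumes b_gt_mu0: "b > \<mu>0"
    and mu4'_bounds: "\<mu>0 < \<mu>4'" "\<mu>4' < \<mu>1'" "\<mu>4' < \<mu>2'" "\<mu>4' < \<mu>3'"
    and below_threshold: "K / b * (b - \<mu>0) < (\<mu>1' - \<mu>0) / \<alpha>1" "K / b * (b - \<mu>0) < (\<mu>2' - \<mu>0) / \<alpha>2"
      "K / b * (b - \<mu>0) < (\<mu>3' - \<mu>0) / (\<alpha>3 + \<beta>1 + \<beta>2)"
begin

definition S_star :: real where "S_star = K / b * (b - \<mu>0)"

lemma S_star_pos: "S_star > 0"
  using pos b_gt_mu0 by (simp add: S_star_def)

lemma N_eventually_le:
  assumes "\<epsilon> > 0"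
  shows "\<exists>T. \<forall>t\<ge>T. N t \<le> S_star + \<epsilon>"
proof (rule eventually_below_if_deriv_le_neg_above[where t\<^sub>0 = 1])
  show "(N has_real_derivative birth_rate t * N t
      - \<mu>0 * S t - \<mu>1' * I1 t - \<mu>2' * I2 t - \<mu>3' * I12 t - \<mu>4' * R t) (at t)" if "t \<ge> 1" for t
    using that by (intro N_has_derivative_at) simp
  show "b / K * (S_star + \<epsilon>) * \<epsilon> > 0" using pos S_star_pos assms by simp
  fix t assume "t \<ge> 1" "N t \<ge> S_star + \<epsilon>"
  then have nonneg: "S t \<ge> 0" "I1 t \<ge> 0" "I2 t \<ge> 0" "I12 t \<ge> 0" "R t \<ge> 0"
    using compartments_nonneg[of t] by auto
  have "\<mu>0 * N t \<le> \<mu>0 * S t + \<mu>1' * I1 t + \<mu>2' * I2 t + \<mu>3' * I12 t + \<mu>4' * R t"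
    using nonneg mu4'_bounds mult_right_mono[of \<mu>0 \<mu>1' "I1 t"] mult_right_mono[of \<mu>0 \<mu>2' "I2 t"]
      mult_right_mono[of \<mu>0 \<mu>3' "I12 t"] mult_right_mono[of \<mu>0 \<mu>4' "R t"]
    by (simp add: N_def algebra_simps)
  moreover have "birth_rate t * N t - \<mu>0 * N t = b / K * (S_star - N t) * N t"
    using pos by (simp add: birth_rate_def S_star_def field_simps)
  moreover have "b / K * (S_star - N t) * N t \<le> -(b / K * (S_star + \<epsilon>) * \<epsilon>)"
    using pos S_star_pos assms \<open>N t \<ge> S_star + \<epsilon>\<close> by (intro logistic_excess_bound) auto
  ultimately show "birth_rate t * N t - \<mu>0 * S t - \<mu>1' * I1 t - \<mu>2' * I2 t - \<mu>3' * I12 t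
      - \<mu>4' * R t \<le> -(b / K * (S_star + \<epsilon>) * \<epsilon>)"
    by linarith
qed

lemma decay_constants_exist:
  obtains X \<delta> where "S_star < X" "\<delta> > 0" "X * \<alpha>1 \<le> \<mu>1' - \<mu>0 - \<delta>" "X * \<alpha>2 \<le> \<mu>2' - \<mu>0 - \<delta>"
    "X * (\<alpha>3 + \<beta>1 + \<beta>2) \<le> \<mu>3' - \<mu>0 - \<delta>" "\<delta> \<le> \<mu>4' - \<mu>0"
proof -
  define m where "m = min ((\<mu>1' - \<mu>0) / \<alpha>1) (min ((\<mu>2' - \<mu>0) / \<alpha>2) ((\<mu>3' - \<mu>0) / (\<alpha>3 + \<beta>1 + \<beta>2)))"
  have "S_star < m" using below_threshold by (simp add: m_def S_star_def)
  define X where "X = (S_star + m) / 2"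
  have "S_star < X" "X < m" using \<open>S_star < m\<close> by (simp_all add: X_def)
  then have X: "S_star < X" "X < (\<mu>1' - \<mu>0) / \<alpha>1" "X < (\<mu>2' - \<mu>0) / \<alpha>2"
    "X < (\<mu>3' - \<mu>0) / (\<alpha>3 + \<beta>1 + \<beta>2)"
    by (simp_all add: m_def)
  define \<delta> where "\<delta> = min (min (\<mu>1' - \<mu>0 - X * \<alpha>1) (\<mu>2' - \<mu>0 - X * \<alpha>2))
      (min (\<mu>3' - \<mu>0 - X * (\<alpha>3 + \<beta>1 + \<beta>2)) (\<mu>4' - \<mu>0))"
  have "\<delta> > 0"
    using X(2-4) pos mu4'_bounds by (simp add: \<delta>_def pos_less_divide_eq add_pos_pos)
  with X(1) show ?thesis by (intro that[of X \<delta>]) (auto simp: \<delta>_def)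
qed

lemma V_exp_decay: "\<exists>C \<delta> T. \<delta> > 0 \<and> (\<forall>t\<ge>T. V t \<le> C * exp (-\<delta> * t))"
proof -
  obtain X \<delta> where X: "S_star < X" and "\<delta> > 0" and rates: "X * \<alpha>1 \<le> \<mu>1' - \<mu>0 - \<delta>"
      "X * \<alpha>2 \<le> \<mu>2' - \<mu>0 - \<delta>" "X * (\<alpha>3 + \<beta>1 + \<beta>2) \<le> \<mu>3' - \<mu>0 - \<delta>" "\<delta> \<le> \<mu>4' - \<mu>0"
    by (rule decay_constants_exist)
  obtain T where T: "\<And>t. t \<ge> T \<Longrightarrow> N t \<le> X"
    using N_eventually_le[of "X - S_star"] X by auto
  define T0 where "T0 = max T 1"
  have "V t \<le> V T0 / S T0 * exp (\<delta> * T0) * X * exp (-\<delta> * t)" if "t \<ge> T0" for t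
  proof -
    have "t > 0" "N t \<le> X" using that T by (auto simp: T0_def)
    have "S t > 0" "V t \<ge> 0"
      using S_pos compartments_nonneg[of t] \<open>t > 0\<close> by (auto simp: V_def)
    have "S t \<le> X" using \<open>N t \<le> X\<close> \<open>V t \<ge> 0\<close> N_eq_S_plus_V[of t] by linarith
    have "V t = V t / S t * exp (\<delta> * t) * S t * exp (-\<delta> * t)"
      using \<open>S t > 0\<close> by (simp add: exp_minus)
    also have "\<dots> \<le> V T0 / S T0 * exp (\<delta> * T0) * X * exp (-\<delta> * t)"
    proof -
      have Z_le: "V t / S t * exp (\<delta> * t) \<le> V T0 / S T0 * exp (\<delta> * T0)"
        by (rule V_div_S_exp_antimono[OF _ _ rates that]) (use T in \<open>auto simp: T0_def\<close>)
      moreover have "0 \<le> V t / S t * exp (\<delta> * t)" using \<open>V t \<ge> 0\<close> \<open>S t > 0\<close> by simp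
      ultimately have "V t / S t * exp (\<delta> * t) * S t \<le> V T0 / S T0 * exp (\<delta> * T0) * X"
        using \<open>S t > 0\<close> by (intro mult_mono[OF Z_le \<open>S t \<le> X\<close>]) auto
      then show ?thesis by (rule mult_right_mono) simp
    qed
    finally show ?thesis .
  qed
  with \<open>\<delta> > 0\<close> show ?thesis by blast
qed

lemma V_tendsto_zero: "(V \<longlongrightarrow> 0) at_top"
proof -
  obtain C \<delta> T where "\<delta> > 0" and decay: "\<And>t. t \<ge> T \<Longrightarrow> V t \<le> C * exp (-\<delta> * t)"
    using V_exp_decay by blast
  have "eventually (\<lambda>t. 0 \<le> V t) at_top"
  proof (rule eventually_at_top_linorderI)
    fix t :: real assume "t \<ge> 0"
    then show "0 \<le> V t" using compartments_nonneg[of t] by (simp add: V_def)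
  qed
  moreover have "eventually (\<lambda>t. V t \<le> C * exp (-\<delta> * t)) at_top"
    using decay by (rule eventually_at_top_linorderI)
  ultimately show ?thesis
    by (rule tendsto_sandwich[OF _ _ tendsto_const exp_decay_tendsto_zero[OF \<open>\<delta> > 0\<close>]])
qed

lemma tendsto_zero_if_between_zero_and_V:
  assumes "\<And>t. t \<ge> 0 \<Longrightarrow> 0 \<le> f t \<and> f t \<le> V t"
  shows "(f \<longlongrightarrow> 0) at_top"
proof (rule tendsto_sandwich[OF _ _ tendsto_const V_tendsto_zero])
  show "eventually (\<lambda>t. 0 \<le> f t) at_top" "eventually (\<lambda>t. f t \<le> V t) at_top"
    using assms by (auto intro: eventually_at_top_linorderI[of 0])
qed

lemma infected_tendsto_zero:
  "(I1 \<longlongrightarrow> 0) at_top" "(I2 \<longlongrightarrow> 0) at_top" "(I12 \<longlongrightarrow> 0) at_top" "(R \<longlongrightarrow> 0) at_top"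
proof -
  have bounds: "0 \<le> I1 t \<and> I1 t \<le> V t" "0 \<le> I2 t \<and> I2 t \<le> V t" "0 \<le> I12 t \<and> I12 t \<le> V t"
    "0 \<le> R t \<and> R t \<le> V t" if "t \<ge> 0" for t
    using compartments_nonneg[OF that] by (auto simp: V_def)
  show "(I1 \<longlongrightarrow> 0) at_top" using bounds(1) by (rule tendsto_zero_if_between_zero_and_V)
  show "(I2 \<longlongrightarrow> 0) at_top" using bounds(2) by (rule tendsto_zero_if_between_zero_and_V)
  show "(I12 \<longlongrightarrow> 0) at_top" using bounds(3) by (rule tendsto_zero_if_between_zero_and_V)
  show "(R \<longlongrightarrow> 0) at_top" using bounds(4) by (rule tendsto_zero_if_between_zero_and_V)
qed

lemma rate_S_eq: "rate_S t
    = b / K * (S_star - S t) - (b / K * V t + \<alpha>1 * I1 t + \<alpha>2 * I2 t + (\<beta>1 + \<beta>2 + \<alpha>3) * I12 t)"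
  using pos by (simp add: rate_S_def birth_rate_def S_star_def N_def V_def field_simps)

lemma S_eventually_ge:
  assumes "0 < s\<^sub>0" "s\<^sub>0 < S_star"
  shows "\<exists>T. \<forall>t\<ge>T. s\<^sub>0 \<le> S t"
proof -
  define c where "c = b / K * (S_star - s\<^sub>0) / 2"
  have "c > 0" using pos assms by (simp add: c_def)
  define h where "h t = b / K * V t + \<alpha>1 * I1 t + \<alpha>2 * I2 t + (\<beta>1 + \<beta>2 + \<alpha>3) * I12 t" for t
  have "(h \<longlongrightarrow> b / K * 0 + \<alpha>1 * 0 + \<alpha>2 * 0 + (\<beta>1 + \<beta>2 + \<alpha>3) * 0) at_top"
    unfolding h_def[abs_def] by (intro tendsto_intros V_tendsto_zero infected_tendsto_zero)
  then obtain T1 where T1: "\<And>t. t \<ge> T1 \<Longrightarrow> h t < c"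
    using order_tendstoD(2)[of h 0 at_top c] \<open>c > 0\<close> by (auto simp: eventually_at_top_linorder)
  \<comment> \<open>as long as S is below the target level, ln S increases at rate at least c\<close>
  have "\<exists>T. \<forall>t\<ge>T. - ln (S t) \<le> - ln s\<^sub>0"
  proof (rule eventually_below_if_deriv_le_neg_above[where t\<^sub>0 = "max T1 1" and u' = "\<lambda>t. - rate_S t"])
    fix t assume "t \<ge> max T1 1"
    then have "t > 0" "h t < c" using T1 by auto
    then have "S t > 0" using S_pos by simp
    have "((\<lambda>t. ln (S t)) has_real_derivative inverse (S t) * (rate_S t * S t)) (at t)"
      using DERIV_chain2[OF DERIV_ln[OF \<open>S t > 0\<close>] compartments_has_derivative_at(1)[OF \<open>t > 0\<close>]]
      by (simp add: o_def)
    moreover have "inverse (S t) * (rate_S t * S t) = rate_S t" using \<open>S t > 0\<close> by simp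
    ultimately show "((\<lambda>t. - ln (S t)) has_real_derivative - rate_S t) (at t)"
      using DERIV_minus by fastforce
    assume "- ln (S t) \<ge> - ln s\<^sub>0"
    then have "S t \<le> s\<^sub>0" using \<open>S t > 0\<close> assms(1) by simp
    then have "b / K * (S_star - s\<^sub>0) \<le> b / K * (S_star - S t)"
      using pos by (intro mult_left_mono) auto
    then have "b / K * (S_star - S t) \<ge> 2 * c" by (simp add: c_def)
    then show "- rate_S t \<le> - c" using \<open>h t < c\<close> by (simp add: rate_S_eq h_def)
  qed fact
  then obtain T where T: "\<And>t. t \<ge> T \<Longrightarrow> - ln (S t) \<le> - ln s\<^sub>0" by blast
  have "s\<^sub>0 \<le> S t" if "t \<ge> max T 0" for t
  proof -
    have "- ln (S t) \<le> - ln s\<^sub>0" "S t > 0" using T[of t] S_pos[of t] that by auto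
    with assms(1) show ?thesis by simp
  qed
  then show ?thesis by blast
qed

lemma S_tendsto_S_star: "(S \<longlongrightarrow> S_star) at_top"
proof (rule order_tendstoI)
  fix a assume "a < S_star"
  define s\<^sub>0 where "s\<^sub>0 = (max a 0 + S_star) / 2"
  have "0 < s\<^sub>0" "s\<^sub>0 < S_star" "a < s\<^sub>0"
    using \<open>a < S_star\<close> S_star_pos by (auto simp: s\<^sub>0_def)
  with S_eventually_ge[of s\<^sub>0] obtain T where "\<And>t. t \<ge> T \<Longrightarrow> s\<^sub>0 \<le> S t" by blast
  with \<open>a < s\<^sub>0\<close> show "eventually (\<lambda>t. a < S t) at_top"
    by (auto intro: eventually_at_top_linorderI[of T] less_le_trans)
next
  fix a assume "a > S_star"
  then obtain T where T: "\<And>t. t \<ge> T \<Longrightarrow> N t \<le> S_star + (a - S_star) / 2"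
    using N_eventually_le[of "(a - S_star) / 2"] by auto
  have "S t < a" if "t \<ge> max T 0" for t
  proof -
    have "t \<ge> T" "t \<ge> 0" using that by auto
    then have "V t \<ge> 0" using compartments_nonneg[of t] by (simp add: V_def)
    then have "S t \<le> N t" using N_eq_S_plus_V[of t] by simp
    also have "N t \<le> S_star + (a - S_star) / 2" using T \<open>t \<ge> T\<close> by blast
    also have "\<dots> < a" using \<open>a > S_star\<close> by (simp add: field_simps)
    finally show ?thesis .
  qed
  then show "eventually (\<lambda>t. S t < a) at_top"
    by (rule eventually_at_top_linorderI)
qed

end

theorem mainTheorem6:
  fixes b K \<alpha>1 \<alpha>2 \<alpha>3 \<beta>1 \<beta>2 \<gamma>1 \<gamma>2 \<eta>1 \<eta>2 \<rho>1 \<rho>2 \<rho>3 :: real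
    and \<mu>0 \<mu>1' \<mu>2' \<mu>3' \<mu>4' \<mu>1 \<mu>2 \<mu>3 :: real
    and S I1 I2 I12 R :: "real \<Rightarrow> real"
  assumes pos: "b > 0" "K > 0" "\<alpha>1 > 0" "\<alpha>2 > 0" "\<alpha>3 > 0" "\<beta>1 > 0" "\<beta>2 > 0"
      "\<gamma>1 > 0" "\<gamma>2 > 0" "\<eta>1 > 0" "\<eta>2 > 0" "\<rho>1 > 0" "\<rho>2 > 0" "\<rho>3 > 0"
      "\<mu>0 > 0" "\<mu>1' > 0" "\<mu>2' > 0" "\<mu>3' > 0" "\<mu>4' > 0"
    and mu_def: "\<mu>1 = \<rho>1 + \<mu>1'" "\<mu>2 = \<rho>2 + \<mu>2'" "\<mu>3 = \<rho>3 + \<mu>3'"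
    and standing: "b > \<mu>0" "b > \<mu>1" "b > \<mu>2" "b > \<mu>3" "b > \<mu>4'"
      "\<mu>0 < \<mu>4'" "\<mu>4' < \<mu>1'" "\<mu>4' < \<mu>2'" "\<mu>4' < \<mu>3'"
    and sigma_order: "(\<mu>1 - \<mu>0) / \<alpha>1 < (\<mu>2 - \<mu>0) / \<alpha>2"
      "(\<mu>2 - \<mu>0) / \<alpha>2 < (\<mu>3 - \<mu>0) / \<alpha>3"
    and threshold: "K / b * (b - \<mu>0) < Min {(\<mu>1' - \<mu>0) / \<alpha>1, (\<mu>2' - \<mu>0) / \<alpha>2,
                        (\<mu>3' - \<mu>0) / (\<alpha>3 + \<beta>1 + \<beta>2)}"
    and dS: "\<And>t. t \<ge> 0 \<Longrightarrow> (S has_real_derivative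
        ((b * (1 - (S t + I1 t + I2 t + I12 t + R t) / K) - \<alpha>1 * I1 t - \<alpha>2 * I2 t
          - (\<beta>1 + \<beta>2 + \<alpha>3) * I12 t - \<mu>0) * S t)) (at t within {0..})"
    and dI1: "\<And>t. t \<ge> 0 \<Longrightarrow> (I1 has_real_derivative
        ((b * (1 - (S t + I1 t + I2 t + I12 t + R t) / K) + \<alpha>1 * S t - \<eta>1 * I12 t
          - \<gamma>1 * I2 t - \<mu>1) * I1 t + \<beta>1 * S t * I12 t)) (at t within {0..})"
    and dI2: "\<And>t. t \<ge> 0 \<Longrightarrow> (I2 has_real_derivative
        ((b * (1 - (S t + I1 t + I2 t + I12 t + R t) / K) + \<alpha>2 * S t - \<eta>2 * I12 t
          - \<gamma>2 * I1 t - \<mu>2) * I2 t + \<beta>2 * S t * I12 t)) (at t within {0..})"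
    and dI12: "\<And>t. t \<ge> 0 \<Longrightarrow> (I12 has_real_derivative
        ((b * (1 - (S t + I1 t + I2 t + I12 t + R t) / K) + \<alpha>3 * S t + \<eta>1 * I1 t
          + \<eta>2 * I2 t - \<mu>3) * I12 t + (\<gamma>1 + \<gamma>2) * I1 t * I2 t)) (at t within {0..})"
    and dR: "\<And>t. t \<ge> 0 \<Longrightarrow> (R has_real_derivative
        ((b * (1 - (S t + I1 t + I2 t + I12 t + R t) / K) - \<mu>4') * R t
          + \<rho>1 * I1 t + \<rho>2 * I2 t + \<rho>3 * I12 t)) (at t within {0..})"
    and init: "S 0 > 0" "I1 0 \<ge> 0" "I2 0 \<ge> 0" "I12 0 \<ge> 0" "R 0 \<ge> 0"
  shows "(I1 \<longlongrightarrow> 0) at_top \<and> (I2 \<longlongrightarrow> 0) at_top \<and> (I12 \<longlongrightarrow> 0) at_top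
       \<and> (R \<longlongrightarrow> 0) at_top \<and> (S \<longlongrightarrow> K / b * (b - \<mu>0)) at_top"
proof -
  interpret coinfection_model_below_threshold
    b K \<alpha>1 \<alpha>2 \<alpha>3 \<beta>1 \<beta>2 \<gamma>1 \<gamma>2 \<eta>1 \<eta>2 \<rho>1 \<rho>2 \<rho>3 \<mu>0 \<mu>1' \<mu>2' \<mu>3' \<mu>4' \<mu>1 \<mu>2 \<mu>3 S I1 I2 I12 R
  proof unfold_locales
    show "K / b * (b - \<mu>0) < (\<mu>1' - \<mu>0) / \<alpha>1" "K / b * (b - \<mu>0) < (\<mu>2' - \<mu>0) / \<alpha>2"
      "K / b * (b - \<mu>0) < (\<mu>3' - \<mu>0) / (\<alpha>3 + \<beta>1 + \<beta>2)"
      using threshold by simp_all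
  qed (fact pos mu_def standing(1,6-9) dS dI1 dI2 dI12 dR init)+
  show ?thesis
    using infected_tendsto_zero S_tendsto_S_star by (simp add: S_star_def)
qed

end
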